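(* Let $\mathcal{T}$ be a finite or countably infinite set and let $\mathbf{p} \ne \mathbf{q}$ be probability distributions on $\mathcal{T}$. Then there exists a strict total order $\prec^*$ on $\mathcal{T}$ such that the associated rank statistic $R$ is not uniformly distributed on $\{0,1\}$ for $m = 1$, and hence for every $m \ge 1$ the associated rank statistic is not uniformly distributed on $\{0,1,\dots,m\}$. Here, for a strict total order $\prec$ and a positive integer $m$, the associated rank statistic is $R = \sum_{j=1}^m \big(\mathbb{I}[X_j \prec X_0] + \mathbb{I}[X_j = X_0, U_j < U_0]\big)$, where $X_0 \sim \mathbf{q}$, $X_1,\dots,X_m \sim^{\mathrm{iid}} \mathbf{p}$, $U_0,\dots,U_m \sim^{\mathrm{iid}} \mathrm{Uniform}(0,1)$ are mutually independent.
   Context: $\mathbb{I}[\cdot]$ denotes the indicator of an event. *)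

theory Defs
  imports "HOL-Probability.Probability"
begin

definition rank_space :: "'a pmf \<Rightarrow> 'a pmf \<Rightarrow> nat \<Rightarrow> ('a \<times> (nat \<Rightarrow> 'a) \<times> (nat \<Rightarrow> real)) measure" where
  "rank_space p q m =
     measure_pmf q \<Otimes>\<^sub>M
       (PiM {1..m} (\<lambda>_. measure_pmf p) \<Otimes>\<^sub>M
        PiM {0..m} (\<lambda>_. uniform_measure lborel {0<..<1::real}))"

text \<open>Rank statistic R = sum_{j=1}^m (I[X_j < X_0] + I[X_j = X_0 and U_j < U_0]),
  where the strict order is given as a relation r, (a, b) in r meaning a precedes b.\<close>
definition rank_stat :: "('a \<times> 'a) set \<Rightarrow> nat \<Rightarrow> ('a \<times> (nat \<Rightarrow> 'a) \<times> (nat \<Rightarrow> real)) \<Rightarrow> nat" where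
  "rank_stat r m = (\<lambda>(x0, x, u). \<Sum>j = 1..m. of_bool ((x j, x0) \<in> r) + of_bool (x j = x0 \<and> u j < u 0))"

definition rank_uniform :: "'a pmf \<Rightarrow> 'a pmf \<Rightarrow> ('a \<times> 'a) set \<Rightarrow> nat \<Rightarrow> bool" where
  "rank_uniform p q r m =
     (\<forall>k \<in> {0..m}. measure (rank_space p q m) {\<omega> \<in> space (rank_space p q m). rank_stat r m \<omega> = k}
                    = 1 / real (m + 1))"

end

theory Submission
  imports Defs
begin

text \<open>Conditionally on \<open>X\<^sub>0\<close>, every summand of \<open>R\<close> has the same mean
  \<open>\<theta>(\<prec>) = P(X\<^sub>1 \<prec> X\<^sub>0) + P(X\<^sub>1 = X\<^sub>0) P(U\<^sub>1 < U\<^sub>0)\<close>, so \<open>E R = m \<theta>(\<prec>)\<close>;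
  if \<open>R\<close> is uniform on \<open>{0, \<dots>, m}\<close> then \<open>E R = m/2\<close>, forcing \<open>\<theta>(\<prec>) = 1/2\<close>.
  Pick \<open>t\<close> with \<open>p(t) \<noteq> q(t)\<close> and an arbitrary strict order on the other points. Putting \<open>t\<close>
  first rather than last changes \<open>\<theta>\<close> by \<open>p(t)(1 - q(t)) - q(t)(1 - p(t)) = p(t) - q(t) \<noteq> 0\<close>,
  so one of these two orders has \<open>\<theta> \<noteq> 1/2\<close>.\<close>

abbreviation uniform01 :: "real measure" where
  "uniform01 \<equiv> uniform_measure lborel {0<..<1}"

lemma prob_space_uniform01: "prob_space uniform01"
  by (rule prob_space_uniform_measure) auto

lemma nn_integral_pair_measure_pmf:
  fixes q :: "'a pmf" and F :: "'a \<Rightarrow> 'b \<Rightarrow> ennreal"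
  assumes "sigma_finite_measure N" and F: "\<And>a. F a \<in> borel_measurable N"
  shows "(\<integral>\<^sup>+\<omega>. F (fst \<omega>) (snd \<omega>) \<partial>(measure_pmf q \<Otimes>\<^sub>M N)) = (\<integral>\<^sup>+a. \<integral>\<^sup>+y. F a y \<partial>N \<partial>q)"
proof -
  interpret N: sigma_finite_measure N by fact
  define S where "S = set_pmf q"
  obtain s0 where s0: "s0 \<in> S" unfolding S_def using set_pmf_not_empty[of q] by blast
  \<comment> \<open>\<open>F\<close> need not be jointly measurable, but its restriction to the countable support of \<open>q\<close> is.\<close>
  define G where "G \<omega> = F (if fst \<omega> \<in> S then fst \<omega> else s0) (snd \<omega>) * indicator S (fst \<omega>)" for \<omega>
  have G: "G \<in> borel_measurable (measure_pmf q \<Otimes>\<^sub>M N)"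
  proof -
    have [measurable]: "(\<lambda>\<omega>. fst \<omega> \<in> S) \<in> measurable (measure_pmf q \<Otimes>\<^sub>M N) (count_space UNIV)"
      by (rule measurable_compose[OF measurable_fst]) simp
    have "(\<lambda>\<omega>. F a (snd \<omega>) * indicator S (fst \<omega>)) \<in> borel_measurable (measure_pmf q \<Otimes>\<^sub>M N)" for a
      using F[of a] by measurable
    moreover have "(\<lambda>\<omega>. if fst \<omega> \<in> S then fst \<omega> else s0) \<in> measurable (measure_pmf q \<Otimes>\<^sub>M N) (count_space S)"
      by (rule measurable_compose[OF measurable_fst]) (auto simp: s0)
    ultimately show ?thesis
      unfolding G_def by (rule measurable_compose_countable') (simp add: S_def)
  qed
  have "(UNIV - S) \<times> space N \<in> null_sets (measure_pmf q \<Otimes>\<^sub>M N)"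
    by (simp add: null_sets_def N.emeasure_pair_measure_Times S_def
        measure_pmf.emeasure_eq_measure measure_pmf_zero_iff)
  then have AE: "AE \<omega> in measure_pmf q \<Otimes>\<^sub>M N. fst \<omega> \<in> S"
    by (rule AE_I') (auto simp: space_pair_measure)
  have "(\<integral>\<^sup>+\<omega>. F (fst \<omega>) (snd \<omega>) \<partial>(measure_pmf q \<Otimes>\<^sub>M N)) = (\<integral>\<^sup>+\<omega>. G \<omega> \<partial>(measure_pmf q \<Otimes>\<^sub>M N))"
    by (rule nn_integral_cong_AE) (use AE in \<open>auto simp: G_def\<close>)
  also have "\<dots> = (\<integral>\<^sup>+a. \<integral>\<^sup>+y. G (a, y) \<partial>N \<partial>q)"
    by (rule N.nn_integral_fst[symmetric]) (rule G)
  also have "\<dots> = (\<integral>\<^sup>+a. \<integral>\<^sup>+y. F a y \<partial>N \<partial>q)"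
    by (rule nn_integral_cong_AE) (use AE_measure_pmf[of q] in \<open>eventually_elim, auto simp: G_def S_def\<close>)
  finally show ?thesis .
qed

lemma nn_integral_PiM_component:
  assumes "\<And>i. i \<in> I \<Longrightarrow> prob_space (M i)" and "j \<in> I" and "\<phi> \<in> borel_measurable (M j)"
  shows "(\<integral>\<^sup>+x. \<phi> (x j) \<partial>PiM I M) = (\<integral>\<^sup>+y. \<phi> y \<partial>M j)"
proof -
  have "(\<integral>\<^sup>+x. \<phi> (x j) \<partial>PiM I M) = (\<integral>\<^sup>+y. \<phi> y \<partial>distr (PiM I M) (M j) (\<lambda>x. x j))"
    by (rule nn_integral_distr[symmetric]) (use assms in auto)
  also have "\<dots> = (\<integral>\<^sup>+y. \<phi> y \<partial>M j)"
    by (simp add: distr_PiM_component assms)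
  finally show ?thesis .
qed

lemma nn_integral_PiM_pair:
  assumes "prob_space M" and "i \<in> I" "j \<in> I" "i \<noteq> j" and \<psi>: "\<psi> \<in> borel_measurable (M \<Otimes>\<^sub>M M)"
  shows "(\<integral>\<^sup>+x. \<psi> (x i, x j) \<partial>PiM I (\<lambda>_. M)) = (\<integral>\<^sup>+z. \<psi> z \<partial>(M \<Otimes>\<^sub>M M))"
proof -
  interpret M: prob_space M by fact
  define f where "f b = (if b then i else j)" for b
  have f: "inj f" "f \<in> UNIV \<rightarrow> I" using assms by (auto simp: f_def inj_def)
  have pair: "M \<Otimes>\<^sub>M M = distr (PiM UNIV (\<lambda>_. M)) (M \<Otimes>\<^sub>M M) (\<lambda>x. (x True, x False))"
    using pair_measure_eq_distr_PiM[of M M] M.sigma_finite_measure_axioms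
    by (simp add: bool.case_distrib[symmetric] case_bool_if)
  have reindex: "distr (PiM I (\<lambda>_. M)) (PiM UNIV (\<lambda>_. M)) (\<lambda>x. \<lambda>b\<in>UNIV. x (f b)) = PiM UNIV (\<lambda>_. M)"
    using distr_PiM_reindex[of I "\<lambda>_. M" f UNIV] f M.prob_space_axioms by simp
  have [measurable]: "(\<lambda>x. \<lambda>b\<in>UNIV. x (f b)) \<in> PiM I (\<lambda>_. M) \<rightarrow>\<^sub>M PiM UNIV (\<lambda>_. M)"
    by (rule measurable_restrict) (use f in \<open>auto intro: measurable_component_singleton\<close>)
  have "(\<integral>\<^sup>+z. \<psi> z \<partial>(M \<Otimes>\<^sub>M M)) = (\<integral>\<^sup>+x. \<psi> (x True, x False) \<partial>PiM UNIV (\<lambda>_. M))"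
    by (subst pair, rule nn_integral_distr) (auto intro: \<psi>)
  also have "\<dots> = (\<integral>\<^sup>+x. \<psi> (x (f True), x (f False)) \<partial>PiM I (\<lambda>_. M))"
    by (subst reindex[symmetric], subst nn_integral_distr) (use \<psi> in auto)
  finally show ?thesis by (simp add: f_def)
qed

lemma nn_integral_of_nat_uniform:
  fixes f :: "'a \<Rightarrow> nat"
  assumes "prob_space M" and le: "\<And>\<omega>. f \<omega> \<le> m"
    and unif: "\<And>k. k \<le> m \<Longrightarrow> measure M {\<omega> \<in> space M. f \<omega> = k} = 1 / real (m + 1)"
  shows "(\<integral>\<^sup>+\<omega>. of_nat (f \<omega>) \<partial>M) = ennreal (real m / 2)"
proof -
  interpret M: prob_space M by fact
  define L where "L k = {\<omega> \<in> space M. f \<omega> = k}" for k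
  \<comment> \<open>Sets outside the \<sigma>-algebra have measure 0, so positive measure makes the levels measurable.\<close>
  have L: "L k \<in> sets M" if "k \<le> m" for k
    using unif[OF that] measure_notin_sets[of "L k" M] by (force simp: L_def)
  have "(\<integral>\<^sup>+\<omega>. of_nat (f \<omega>) \<partial>M) = (\<integral>\<^sup>+\<omega>. (\<Sum>k=0..m. of_nat k * indicator (L k) \<omega>) \<partial>M)"
  proof (rule nn_integral_cong)
    fix \<omega> assume "\<omega> \<in> space M"
    then have "(\<Sum>k=0..m. of_nat k * indicator (L k) \<omega>) = (\<Sum>k=0..m. if k = f \<omega> then of_nat k else 0 :: ennreal)"
      by (intro sum.cong) (auto simp: L_def indicator_def)
    then show "of_nat (f \<omega>) = (\<Sum>k=0..m. of_nat k * indicator (L k) \<omega> :: ennreal)"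
      using le[of \<omega>] by (simp add: sum.delta')
  qed
  also have "\<dots> = (\<Sum>k=0..m. of_nat k * emeasure M (L k))"
  proof (intro trans[OF nn_integral_sum] sum.cong refl)
    fix k assume "k \<in> {0..m}"
    then show "(\<integral>\<^sup>+\<omega>. of_nat k * indicator (L k) \<omega> \<partial>M) = of_nat k * emeasure M (L k)"
      by (simp add: nn_integral_cmult_indicator L)
  qed (use L in auto)
  also have "\<dots> = (\<Sum>k=0..m. ennreal (real k / real (m + 1)))"
    by (intro sum.cong) (auto simp: M.emeasure_eq_measure L_def unif ennreal_of_nat_eq_real_of_nat
        ennreal_mult[symmetric])
  also have "\<dots> = ennreal (\<Sum>k=0..m. real k / real (m + 1))"
    by (simp add: sum_ennreal)
  also have "(\<Sum>k=0..m. real k / real (m + 1)) = real m / 2"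
    using double_gauss_sum[of m, where 'a=real]
    by (simp add: sum_divide_distrib[symmetric] field_simps)
  finally show ?thesis .
qed

lemma emeasure_pmf_Diff_singleton:
  assumes "set_pmf p \<subseteq> T" and "t \<in> T"
  shows "emeasure (measure_pmf p) (T - {t}) = ennreal (1 - pmf p t)"
proof -
  have "measure (measure_pmf p) T = 1"
    using assms(1) by (subst measure_pmf.prob_eq_1) (auto simp: AE_measure_pmf_iff)
  then show ?thesis
    using assms(2)
    by (simp add: measure_pmf.emeasure_eq_measure measure_pmf.finite_measure_Diff measure_pmf_single)
qed

definition put_first :: "'a set \<Rightarrow> 'a \<Rightarrow> ('a \<times> 'a) set \<Rightarrow> ('a \<times> 'a) set" where
  "put_first T t r = {(a, b). a \<in> T \<and> b \<in> T \<and> b \<noteq> t \<and> (a = t \<or> (a, b) \<in> r)}"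

definition put_last :: "'a set \<Rightarrow> 'a \<Rightarrow> ('a \<times> 'a) set \<Rightarrow> ('a \<times> 'a) set" where
  "put_last T t r = {(a, b). a \<in> T \<and> b \<in> T \<and> a \<noteq> t \<and> (b = t \<or> (a, b) \<in> r)}"

lemma strict_linear_order_on_put_first:
  assumes "strict_linear_order_on T r"
  shows "strict_linear_order_on T (put_first T t r)"
proof -
  have "trans r" "irrefl r" "total_on T r"
    using assms by (simp_all add: strict_linear_order_on_def)
  then show ?thesis
    unfolding strict_linear_order_on_def
    by (intro conjI transI irreflI total_onI) (auto simp: put_first_def irrefl_def total_on_def dest: transD)
qed

lemma strict_linear_order_on_put_last:
  assumes "strict_linear_order_on T r"
  shows "strict_linear_order_on T (put_last T t r)"
proof -
  have "trans r" "irrefl r" "total_on T r"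
    using assms by (simp_all add: strict_linear_order_on_def)
  then show ?thesis
    unfolding strict_linear_order_on_def
    by (intro conjI transI irreflI total_onI) (auto simp: put_last_def irrefl_def total_on_def dest: transD)
qed

lemma ex_strict_linear_order_on: "\<exists>r. strict_linear_order_on T r"
proof -
  obtain r :: "'a rel" where "Well_order r \<and> Field r = UNIV"
    using well_ordering ..
  then have "linear_order r"
    by (metis well_order_on_def)
  then have "strict_linear_order_on UNIV (r - Id)"
    by (rule strict_linear_order_on_diff_Id)
  then have "strict_linear_order_on T (r - Id)"
    unfolding strict_linear_order_on_def by (meson subset_UNIV total_on_subset)
  then show ?thesis
    by blast
qed

definition tie_break_prob :: ennreal where
  "tie_break_prob = (\<integral>\<^sup>+z. of_bool (snd z < fst z) \<partial>(uniform01 \<Otimes>\<^sub>M uniform01))"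

definition rank_step_mean :: "'a pmf \<Rightarrow> 'a pmf \<Rightarrow> ('a \<times> 'a) set \<Rightarrow> ennreal" where
  "rank_step_mean p q r = (\<integral>\<^sup>+a. \<integral>\<^sup>+y. (of_bool ((y, a) \<in> r) + of_bool (y = a) * tie_break_prob) \<partial>p \<partial>q)"

lemma prob_space_rank_space: "prob_space (rank_space p q m)"
  unfolding rank_space_def
  by (intro prob_space_pair prob_space_PiM prob_space_uniform01 measure_pmf.prob_space_axioms)

lemma rank_stat_le:
  assumes "irrefl r"
  shows "rank_stat r m \<omega> \<le> m"
proof -
  obtain x0 x u where \<omega>: "\<omega> = (x0, x, u)" by (cases \<omega>) auto
  have "rank_stat r m \<omega> \<le> (\<Sum>j=1..m. 1)"
    unfolding \<omega> rank_stat_def prod.case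
    by (intro sum_mono) (use assms in \<open>auto simp: irrefl_def\<close>)
  then show ?thesis by simp
qed

lemma measurable_rank_term:
  fixes j m :: nat
  assumes "j \<in> {1..m}"
  shows "(\<lambda>(x, u). of_bool ((x j, a) \<in> r) + of_bool (x j = a \<and> u j < u 0) :: ennreal)
    \<in> borel_measurable (PiM {1..m} (\<lambda>_. measure_pmf p) \<Otimes>\<^sub>M PiM {0..m} (\<lambda>_. uniform01))"
proof -
  \<comment> \<open>Kept opaque, so that the measurability prover does not replace \<open>measure_pmf p\<close> by a count space.\<close>
  define P where "P = PiM {1..m} (\<lambda>_. measure_pmf p)"
  define U where "U = PiM {0..m} (\<lambda>_. uniform01)"
  have x: "(\<lambda>xu. fst xu j) \<in> P \<Otimes>\<^sub>M U \<rightarrow>\<^sub>M count_space UNIV"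
    unfolding P_def using assms by measurable
  have [measurable]: "Measurable.pred (P \<Otimes>\<^sub>M U) (\<lambda>xu. (fst xu j, a) \<in> r)"
    "Measurable.pred (P \<Otimes>\<^sub>M U) (\<lambda>xu. fst xu j = a)"
    by (rule measurable_compose[OF x], simp)+
  have u: "(\<lambda>xu. snd xu i) \<in> borel_measurable (P \<Otimes>\<^sub>M U)" if "i \<in> {0..m}" for i
    unfolding U_def by measurable (use that in simp)
  have "j \<in> {0..m}" "0 \<in> {0..m}"
    using assms by auto
  note [measurable] = this[THEN u]
  have "(\<lambda>xu. of_bool ((fst xu j, a) \<in> r) + of_bool (fst xu j = a \<and> snd xu j < snd xu 0) :: ennreal)
      \<in> borel_measurable (P \<Otimes>\<^sub>M U)"
    using assms by measurable
  then show ?thesis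
    by (simp add: P_def U_def case_prod_beta)
qed

lemma nn_integral_rank_term:
  fixes j m :: nat
  assumes "j \<in> {1..m}"
  shows "(\<integral>\<^sup>+(x, u). (of_bool ((x j, a) \<in> r) + of_bool (x j = a \<and> u j < u 0))
            \<partial>(PiM {1..m} (\<lambda>_. measure_pmf p) \<Otimes>\<^sub>M PiM {0..m} (\<lambda>_. uniform01)))
       = (\<integral>\<^sup>+y. (of_bool ((y, a) \<in> r) + of_bool (y = a) * tie_break_prob) \<partial>p)"
proof -
  define P where "P = PiM {1..m} (\<lambda>_. measure_pmf p)"
  define U where "U = PiM {0..m} (\<lambda>_. uniform01)"
  interpret U: prob_space U
    unfolding U_def by (intro prob_space_PiM prob_space_uniform01)
  have tie: "(\<integral>\<^sup>+u. of_bool (u j < u 0) \<partial>U) = tie_break_prob"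
    unfolding tie_break_prob_def U_def
    using nn_integral_PiM_pair[OF prob_space_uniform01, of 0 "{0..m}" j "\<lambda>z. of_bool (snd z < fst z)"]
      assms by simp
  have [measurable]: "(\<lambda>u. of_bool (u j < u 0) :: ennreal) \<in> borel_measurable U"
    unfolding U_def by measurable (use assms in auto)
  have "(\<integral>\<^sup>+(x, u). (of_bool ((x j, a) \<in> r) + of_bool (x j = a \<and> u j < u 0)) \<partial>(P \<Otimes>\<^sub>M U))
      = (\<integral>\<^sup>+x. \<integral>\<^sup>+u. (of_bool ((x j, a) \<in> r) + of_bool (x j = a) * of_bool (u j < u 0)) \<partial>U \<partial>P)"
    by (subst U.nn_integral_fst[symmetric])
      (use measurable_rank_term[OF assms] in
        \<open>auto simp: P_def U_def case_prod_beta intro!: nn_integral_cong\<close>)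
  also have "\<dots> = (\<integral>\<^sup>+x. (of_bool ((x j, a) \<in> r) + of_bool (x j = a) * tie_break_prob) \<partial>P)"
    by (intro nn_integral_cong) (simp add: nn_integral_add nn_integral_cmult U.emeasure_space_1 tie)
  also have "\<dots> = (\<integral>\<^sup>+y. (of_bool ((y, a) \<in> r) + of_bool (y = a) * tie_break_prob) \<partial>p)"
    unfolding P_def using assms
    by (intro nn_integral_PiM_component measure_pmf.prob_space_axioms) auto
  finally show ?thesis
    by (simp add: P_def U_def)
qed

lemma nn_integral_rank_stat:
  "(\<integral>\<^sup>+\<omega>. of_nat (rank_stat r m \<omega>) \<partial>rank_space p q m) = of_nat m * rank_step_mean p q r"
proof -
  let ?N = "PiM {1..m} (\<lambda>_. measure_pmf p) \<Otimes>\<^sub>M PiM {0..m} (\<lambda>_. uniform01)"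
  let ?term = "\<lambda>a j (x, u). of_bool ((x j, a) \<in> r) + of_bool (x j = a \<and> u j < u 0) :: ennreal"
  have rank_stat_sum: "of_nat (rank_stat r m (a, xu)) = (\<Sum>j=1..m. ?term a j xu)" for a xu
    by (simp add: rank_stat_def case_prod_beta)
  have measurable: "(\<lambda>xu. of_nat (rank_stat r m (a, xu)) :: ennreal) \<in> borel_measurable ?N" for a
    unfolding rank_stat_sum by (rule borel_measurable_sum) (rule measurable_rank_term)
  have "prob_space ?N"
    by (intro prob_space_pair prob_space_PiM prob_space_uniform01 measure_pmf.prob_space_axioms)
  have "(\<integral>\<^sup>+\<omega>. of_nat (rank_stat r m \<omega>) \<partial>rank_space p q m)
      = (\<integral>\<^sup>+\<omega>. of_nat (rank_stat r m (fst \<omega>, snd \<omega>)) \<partial>(measure_pmf q \<Otimes>\<^sub>M ?N))"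
    by (simp add: rank_space_def)
  also have "\<dots> = (\<integral>\<^sup>+a. \<integral>\<^sup>+xu. of_nat (rank_stat r m (a, xu)) \<partial>?N \<partial>q)"
    by (rule nn_integral_pair_measure_pmf)
      (use \<open>prob_space ?N\<close> measurable in \<open>auto intro: prob_space_imp_sigma_finite\<close>)
  also have "\<dots> = (\<integral>\<^sup>+a. of_nat m *
      (\<integral>\<^sup>+y. (of_bool ((y, a) \<in> r) + of_bool (y = a) * tie_break_prob) \<partial>p) \<partial>q)"
  proof (intro nn_integral_cong)
    fix a
    have "(\<integral>\<^sup>+xu. of_nat (rank_stat r m (a, xu)) \<partial>?N) = (\<Sum>j=1..m. \<integral>\<^sup>+xu. ?term a j xu \<partial>?N)"
      unfolding rank_stat_sum by (rule nn_integral_sum) (rule measurable_rank_term)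
    also have "\<dots> = (\<Sum>j=1..m. \<integral>\<^sup>+y. (of_bool ((y, a) \<in> r) + of_bool (y = a) * tie_break_prob) \<partial>p)"
      by (rule sum.cong[OF refl]) (rule nn_integral_rank_term)
    finally show "(\<integral>\<^sup>+xu. of_nat (rank_stat r m (a, xu)) \<partial>?N)
        = of_nat m * (\<integral>\<^sup>+y. (of_bool ((y, a) \<in> r) + of_bool (y = a) * tie_break_prob) \<partial>p)"
      by simp
  qed
  also have "\<dots> = of_nat m * rank_step_mean p q r"
    unfolding rank_step_mean_def by (rule nn_integral_cmult) simp
  finally show ?thesis .
qed

lemma rank_step_mean_if_rank_uniform:
  assumes "rank_uniform p q r m" and "irrefl r" and "m \<ge> 1"
  shows "rank_step_mean p q r = ennreal (1/2)"
proof -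
  have "of_nat m * rank_step_mean p q r = ennreal (real m / 2)"
    unfolding nn_integral_rank_stat[symmetric]
    using assms(1,2) unfolding rank_uniform_def
    by (intro nn_integral_of_nat_uniform prob_space_rank_space rank_stat_le) auto
  also have "\<dots> = ennreal (real m) * ennreal (1/2)"
    by (subst ennreal_mult[symmetric]) auto
  also have "\<dots> = of_nat m * ennreal (1/2)"
    by (simp only: ennreal_of_nat_eq_real_of_nat)
  finally show ?thesis
    using assms(3) by (subst (asm) ennreal_mult_cancel_left) auto
qed

lemma rank_step_mean_put_first_put_last:
  assumes "set_pmf p \<subseteq> T" and "set_pmf q \<subseteq> T" and "t \<in> T"
  shows "rank_step_mean p q (put_first T t r) + ennreal (pmf q t * (1 - pmf p t))
       = rank_step_mean p q (put_last T t r) + ennreal (pmf p t * (1 - pmf q t))"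
proof -
  let ?f = "\<lambda>r' a y. of_bool ((y, a) \<in> r') + of_bool (y = a) * tie_break_prob :: ennreal"
  have product: "(\<integral>\<^sup>+a. \<integral>\<^sup>+y. indicator A a * indicator B y \<partial>p \<partial>q) = emeasure q A * emeasure p B"
    for A B :: "'a set"
    by (simp add: nn_integral_cmult nn_integral_multc ac_simps)
  \<comment> \<open>Only comparisons with \<open>t\<close> differ: \<open>(y, a)\<close> lies in the first order but not in the last
    exactly when \<open>y = t \<noteq> a\<close>, and conversely when \<open>a = t \<noteq> y\<close>.\<close>
  have swap: "?f (put_first T t r) a y + indicator {t} a * indicator (T - {t}) y
      = ?f (put_last T t r) a y + indicator (T - {t}) a * indicator {t} y" for a y
    using assms(3) by (auto simp: put_first_def put_last_def indicator_def)
  have "rank_step_mean p q (put_first T t r) + ennreal (pmf q t * (1 - pmf p t))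
      = rank_step_mean p q (put_first T t r) + emeasure q {t} * emeasure p (T - {t})"
    using assms by (simp add: emeasure_pmf_single emeasure_pmf_Diff_singleton ennreal_mult pmf_le_1)
  also have "\<dots> = (\<integral>\<^sup>+a. \<integral>\<^sup>+y. ?f (put_first T t r) a y + indicator {t} a * indicator (T - {t}) y \<partial>p \<partial>q)"
    unfolding rank_step_mean_def product[symmetric] by (simp add: nn_integral_add)
  also have "\<dots> = (\<integral>\<^sup>+a. \<integral>\<^sup>+y. ?f (put_last T t r) a y + indicator (T - {t}) a * indicator {t} y \<partial>p \<partial>q)"
    unfolding swap ..
  also have "\<dots> = rank_step_mean p q (put_last T t r) + emeasure q (T - {t}) * emeasure p {t}"
    unfolding rank_step_mean_def product[symmetric] by (simp add: nn_integral_add)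
  also have "\<dots> = rank_step_mean p q (put_last T t r) + ennreal (pmf p t * (1 - pmf q t))"
    using assms
    by (simp add: emeasure_pmf_single emeasure_pmf_Diff_singleton ennreal_mult pmf_le_1 mult.commute)
  finally show ?thesis .
qed

lemma rank_step_mean_put_first_or_last_ne_half:
  assumes "set_pmf p \<subseteq> T" and "set_pmf q \<subseteq> T" and "t \<in> T" and "pmf p t \<noteq> pmf q t"
  shows "rank_step_mean p q (put_first T t r) \<noteq> ennreal (1/2) \<or>
         rank_step_mean p q (put_last T t r) \<noteq> ennreal (1/2)"
proof (rule ccontr)
  assume "\<not> ?thesis"
  then have first: "rank_step_mean p q (put_first T t r) = ennreal (1/2)"
    and last: "rank_step_mean p q (put_last T t r) = ennreal (1/2)"
    by auto
  have "ennreal (1/2) + ennreal (pmf q t * (1 - pmf p t))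
      = ennreal (1/2) + ennreal (pmf p t * (1 - pmf q t))"
    using rank_step_mean_put_first_put_last[OF assms(1-3), of r] unfolding first last .
  then have "pmf q t * (1 - pmf p t) = pmf p t * (1 - pmf q t)"
    by (subst (asm) ennreal_add_left_cancel) (auto simp: pmf_le_1)
  with assms(4) show False
    by (simp add: algebra_simps)
qed

theorem theorem3p6:
  fixes T :: "'a set" and p q :: "'a pmf"
  assumes "countable T"
    and "set_pmf p \<subseteq> T" and "set_pmf q \<subseteq> T"
    and "p \<noteq> q"
  shows "\<exists>r. strict_linear_order_on T r \<and> r \<subseteq> T \<times> T \<and>
             \<not> rank_uniform p q r 1 \<and> (\<forall>m\<ge>1. \<not> rank_uniform p q r m)"
proof -
  obtain t where t: "pmf p t \<noteq> pmf q t"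
    using \<open>p \<noteq> q\<close> by (meson pmf_eqI)
  then have "t \<in> T"
    using assms(2,3) by (metis set_pmf_iff subsetD)
  obtain r where r: "strict_linear_order_on T r"
    using ex_strict_linear_order_on by blast
  obtain r' where "r' \<in> {put_first T t r, put_last T t r}"
    and mean: "rank_step_mean p q r' \<noteq> ennreal (1/2)"
    using rank_step_mean_put_first_or_last_ne_half[OF assms(2,3) \<open>t \<in> T\<close> t, of r] by blast
  moreover have "put_first T t r \<subseteq> T \<times> T" "put_last T t r \<subseteq> T \<times> T"
    by (auto simp: put_first_def put_last_def)
  ultimately have r': "strict_linear_order_on T r'" "r' \<subseteq> T \<times> T"
    using strict_linear_order_on_put_first[OF r] strict_linear_order_on_put_last[OF r] by auto
  have "\<forall>m\<ge>1. \<not> rank_uniform p q r' m"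
    using rank_step_mean_if_rank_uniform[of p q r'] mean r'(1)
    by (auto simp: strict_linear_order_on_def)
  with r' show ?thesis
    by auto
qed

end
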